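(* Let $M\in SL(N,\mathbb Z)$ be of type $\mathcal J_0$, with notation as in the context. Then the lattice $\mathcal L$ generated by $v_1,\dots,v_N$ is invariant under $g_0$, and the matrix of $g_0$ in the basis $(v_1,\dots,v_N)$ equals $M^\top$, i.e. $g_0(v_i)=\sum_{k}M_{ik}v_k$ for all $i$.
   Context: $M\in SL(N,\mathbb Z)$ is of type $\mathcal J_0$ if its characteristic polynomial has at least one real root, at least one non-real root, and all real roots simple. Let $\alpha_1,\dots,\alpha_s$ be the real eigenvalues, $N=s+2n$, and $a_1,\dots,a_s\in\mathbb R^N$ corresponding eigenvectors. Choose one eigenvalue in each complex-conjugate pair of non-real eigenvalues and let $W\subset\mathbb C^N$ be the sum of the generalized eigenspaces of $M$ for the chosen eigenvalues, so $\dim_{\mathbb C}W=n$. Fix a basis $b_1,\dots,b_n$ of $W$ and let $R$ be the matrix of the restriction of $M$ to $W$ in this basis. For $1\le i\le N$ put $v_i=(a_1^{(i)},\dots,a_s^{(i)},b_1^{(i)},\dots,b_n^{(i)})\in\mathbb R^s\times\mathbb C^n$, where $x^{(i)}$ is the $i$-th coordinate of $x$; $(v_1,\dots,v_N)$ is a basis of the real vector space $\mathbb R^s\times\mathbb C^n$. Define $g_0:\mathbb R^s\times\mathbb C^n\to\mathbb R^s\times\mathbb C^n$ by $g_0(w_1,\dots,w_s,z)=(\alpha_1w_1,\dots,\alpha_sw_s,R^\top z)$. *)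

theory Defs
  imports "Jordan_Normal_Form.Char_Poly"
begin

definition rmat :: "int mat \<Rightarrow> real mat" where
  "rmat M = map_mat real_of_int M"

definition cmat :: "int mat \<Rightarrow> complex mat" where
  "cmat M = map_mat complex_of_int M"

definition cpoly :: "int mat \<Rightarrow> complex poly" where
  "cpoly M = char_poly (cmat M)"

definition in_SL :: "nat \<Rightarrow> int mat \<Rightarrow> bool" where
  "in_SL N M \<longleftrightarrow> M \<in> carrier_mat N N \<and> det M = 1"

definition type_J0 :: "int mat \<Rightarrow> bool" where
  "type_J0 M \<longleftrightarrow>
     (\<exists>x::real. poly (cpoly M) (of_real x) = 0) \<and>
     (\<exists>z::complex. z \<notin> \<real> \<and> poly (cpoly M) z = 0) \<and>
     (\<forall>x::real. poly (cpoly M) (of_real x) = 0 \<longrightarrow> order (of_real x) (cpoly M) = 1)"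

definition vsum :: "nat \<Rightarrow> ('b \<Rightarrow> 'a::comm_monoid_add vec) \<Rightarrow> 'b set \<Rightarrow> 'a vec" where
  "vsum N f I = vec N (\<lambda>i. \<Sum>k\<in>I. f k $ i)"

definition gen_eigenspace :: "nat \<Rightarrow> complex mat \<Rightarrow> complex \<Rightarrow> complex vec set" where
  "gen_eigenspace N A lam =
     {x \<in> carrier_vec N. ((A - lam \<cdot>\<^sub>m 1\<^sub>m N) ^\<^sub>m N) *\<^sub>v x = 0\<^sub>v N}"

definition gen_eigen_sum :: "nat \<Rightarrow> complex mat \<Rightarrow> complex set \<Rightarrow> complex vec set" where
  "gen_eigen_sum N A C =
     {vsum N x C | x. \<forall>lam\<in>C. x lam \<in> gen_eigenspace N A lam}"

definition is_basis_of :: "nat \<Rightarrow> complex vec set \<Rightarrow> nat \<Rightarrow> (nat \<Rightarrow> complex vec) \<Rightarrow> bool" where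
  "is_basis_of N W n b \<longleftrightarrow>
     (\<forall>l<n. b l \<in> carrier_vec N) \<and>
     (\<forall>c. vsum N (\<lambda>l. c l \<cdot>\<^sub>v b l) {..<n} = 0\<^sub>v N \<longrightarrow> (\<forall>l<n. c l = 0)) \<and>
     W = {vsum N (\<lambda>l. c l \<cdot>\<^sub>v b l) {..<n} | c. True}"

definition pcomb :: "nat \<Rightarrow> nat \<Rightarrow> nat \<Rightarrow> (nat \<Rightarrow> real) \<Rightarrow> (nat \<Rightarrow> real vec \<times> complex vec)
                     \<Rightarrow> real vec \<times> complex vec" where
  "pcomb s n N c v =
     (vec s (\<lambda>j. \<Sum>k<N. c k * fst (v k) $ j),
      vec n (\<lambda>l. \<Sum>k<N. complex_of_real (c k) * snd (v k) $ l))"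

definition lattice_gen :: "nat \<Rightarrow> nat \<Rightarrow> nat \<Rightarrow> (nat \<Rightarrow> real vec \<times> complex vec)
                           \<Rightarrow> (real vec \<times> complex vec) set" where
  "lattice_gen s n N v = {pcomb s n N (\<lambda>k. real_of_int (c k)) v | c :: nat \<Rightarrow> int. True}"

end

theory Submission imports Defs begin

(* Reading the eigenvector equations M a_j = alpha_j a_j and
   M b_l = sum_m R_ml b_m in the i-th coordinate gives g0 v_i = sum_k M_ik v_k, so g0 sends the
   integer combination sum_i c_i v_i to sum_k (c M)_k v_k, again a lattice point. *)

lemma index_mult_mat_vec_sum:
  assumes "A \<in> carrier_mat m k" and "dim_vec x = k" and "i < m"
  shows "(A *\<^sub>v x) $ i = (\<Sum>j<k. A $$ (i, j) * x $ j)"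
  using assms by (simp add: scalar_prod_def atLeast0LessThan)

lemma dim_vec_pcomb [simp]:
  "dim_vec (fst (pcomb s n N c u)) = s" "dim_vec (snd (pcomb s n N c u)) = n"
  by (simp_all add: pcomb_def)

lemma index_pcomb:
  "j < s \<Longrightarrow> fst (pcomb s n N c u) $ j = (\<Sum>k<N. c k * fst (u k) $ j)"
  "l < n \<Longrightarrow> snd (pcomb s n N c u) $ l = (\<Sum>k<N. of_real (c k) * snd (u k) $ l)"
  by (simp_all add: pcomb_def)

lemma pcomb_eqI:
  assumes "dim_vec (fst p) = s" and "dim_vec (snd p) = n"
    and "\<And>j. j < s \<Longrightarrow> fst p $ j = (\<Sum>k<N. c k * fst (u k) $ j)"
    and "\<And>l. l < n \<Longrightarrow> snd p $ l = (\<Sum>k<N. of_real (c k) * snd (u k) $ l)"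
  shows "p = pcomb s n N c u"
proof (rule prod_eqI)
  show "fst p = fst (pcomb s n N c u)"
    using assms by (intro eq_vecI) (simp_all add: index_pcomb)
  show "snd p = snd (pcomb s n N c u)"
    using assms by (intro eq_vecI) (simp_all add: index_pcomb)
qed

lemma pcomb_cong:
  assumes "\<And>k. k < N \<Longrightarrow> u k = u' k"
  shows "pcomb s n N c u = pcomb s n N c u'"
  unfolding pcomb_def using assms by (intro arg_cong2[where f = Pair] eq_vecI sum.cong) auto

lemma sum_mult_sum_swap:
  fixes c :: "'i \<Rightarrow> 'a::comm_semiring_0"
  shows "(\<Sum>i\<in>I. c i * (\<Sum>k\<in>K. d i k * x k)) = (\<Sum>k\<in>K. (\<Sum>i\<in>I. c i * d i k) * x k)"
  unfolding sum_distrib_left sum_distrib_right mult.assoc by (rule sum.swap)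

lemma pcomb_pcomb:
  "pcomb s n N c (\<lambda>i. pcomb s n N (d i) u) = pcomb s n N (\<lambda>k. \<Sum>i<N. c i * d i k) u"
proof (rule pcomb_eqI)
  show "fst (pcomb s n N c (\<lambda>i. pcomb s n N (d i) u)) $ j
      = (\<Sum>k<N. (\<Sum>i<N. c i * d i k) * fst (u k) $ j)" if "j < s" for j
    using that by (simp only: index_pcomb sum_mult_sum_swap)
  show "snd (pcomb s n N c (\<lambda>i. pcomb s n N (d i) u)) $ l
      = (\<Sum>k<N. of_real (\<Sum>i<N. c i * d i k) * snd (u k) $ l)" if "l < n" for l
  proof -
    have "snd (pcomb s n N c (\<lambda>i. pcomb s n N (d i) u)) $ l
        = (\<Sum>i<N. of_real (c i) * (\<Sum>k<N. of_real (d i k) * snd (u k) $ l))"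
      using that by (simp only: index_pcomb)
    also have "\<dots> = (\<Sum>k<N. (\<Sum>i<N. of_real (c i) * of_real (d i k)) * snd (u k) $ l)"
      by (rule sum_mult_sum_swap)
    finally show ?thesis
      by (simp only: of_real_sum of_real_mult)
  qed
qed simp_all

lemma diag_mult_pcomb:
  assumes B: "B \<in> carrier_mat n n" and dims: "\<And>k. k < N \<Longrightarrow> dim_vec (snd (u k)) = n"
  shows "(vec s (\<lambda>j. \<alpha> j * fst (pcomb s n N c u) $ j), B *\<^sub>v snd (pcomb s n N c u))
       = pcomb s n N c (\<lambda>k. (vec s (\<lambda>j. \<alpha> j * fst (u k) $ j), B *\<^sub>v snd (u k)))"
proof (rule pcomb_eqI)
  show "fst (vec s (\<lambda>j. \<alpha> j * fst (pcomb s n N c u) $ j), B *\<^sub>v snd (pcomb s n N c u)) $ j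
      = (\<Sum>k<N. c k * fst (vec s (\<lambda>j. \<alpha> j * fst (u k) $ j), B *\<^sub>v snd (u k)) $ j)"
    if "j < s" for j
    using that by (simp add: index_pcomb sum_distrib_left mult.left_commute)
  show "snd (vec s (\<lambda>j. \<alpha> j * fst (pcomb s n N c u) $ j), B *\<^sub>v snd (pcomb s n N c u)) $ l
      = (\<Sum>k<N. of_real (c k) * snd (vec s (\<lambda>j. \<alpha> j * fst (u k) $ j), B *\<^sub>v snd (u k)) $ l)"
    if l: "l < n" for l
  proof -
    have "(B *\<^sub>v snd (pcomb s n N c u)) $ l
        = (\<Sum>m<n. B $$ (l, m) * (\<Sum>k<N. of_real (c k) * snd (u k) $ m))"
      by (simp add: index_mult_mat_vec_sum[OF B _ l] index_pcomb del: index_mult_mat_vec)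
    also have "\<dots> = (\<Sum>k<N. of_real (c k) * (\<Sum>m<n. B $$ (l, m) * snd (u k) $ m))"
      unfolding sum_distrib_left by (subst sum.swap) (simp add: mult.left_commute)
    also have "\<dots> = (\<Sum>k<N. of_real (c k) * (B *\<^sub>v snd (u k)) $ l)"
      using dims by (simp add: index_mult_mat_vec_sum[OF B _ l] del: index_mult_mat_vec)
    finally show ?thesis
      using l by simp
  qed
qed (use B in simp_all)

lemma generator_image_eq_pcomb:
  assumes M: "M \<in> carrier_mat N N"
    and a: "\<forall>j<s. a j \<in> carrier_vec N" and a_eig: "\<forall>j<s. rmat M *\<^sub>v a j = \<alpha> j \<cdot>\<^sub>v a j"
    and b: "\<forall>l<n. b l \<in> carrier_vec N"
    and R_matrix: "\<forall>l<n. cmat M *\<^sub>v b l = vsum N (\<lambda>m. R $$ (m, l) \<cdot>\<^sub>v b m) {..<n}"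
    and R: "R \<in> carrier_mat n n"
    and v: "\<forall>k. v k = (vec s (\<lambda>j. a j $ k), vec n (\<lambda>l. b l $ k))"
    and i: "i < N"
  shows "(vec s (\<lambda>j. \<alpha> j * fst (v i) $ j), transpose_mat R *\<^sub>v snd (v i))
       = pcomb s n N (\<lambda>k. real_of_int (M $$ (i, k))) v"
proof (rule pcomb_eqI)
  show "fst (vec s (\<lambda>j. \<alpha> j * fst (v i) $ j), transpose_mat R *\<^sub>v snd (v i)) $ j
      = (\<Sum>k<N. real_of_int (M $$ (i, k)) * fst (v k) $ j)"
    if j: "j < s" for j
  proof -
    have dim: "dim_vec (a j) = N"
      using a j carrier_vecD by blast
    have "\<alpha> j * a j $ i = (rmat M *\<^sub>v a j) $ i"
      using a_eig j i dim by simp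
    also have "\<dots> = (\<Sum>k<N. real_of_int (M $$ (i, k)) * a j $ k)"
      using M i dim by (simp add: index_mult_mat_vec_sum rmat_def carrier_matD del: index_mult_mat_vec)
    finally show ?thesis
      using j v by simp
  qed
  show "snd (vec s (\<lambda>j. \<alpha> j * fst (v i) $ j), transpose_mat R *\<^sub>v snd (v i)) $ l
      = (\<Sum>k<N. of_real (real_of_int (M $$ (i, k))) * snd (v k) $ l)"
    if l: "l < n" for l
  proof -
    have dims: "\<And>m. m < n \<Longrightarrow> dim_vec (b m) = N"
      using b carrier_vecD by blast
    have "(transpose_mat R *\<^sub>v vec n (\<lambda>m. b m $ i)) $ l = (\<Sum>m<n. R $$ (m, l) * b m $ i)"
      using R l by (simp add: index_mult_mat_vec_sum del: index_mult_mat_vec)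
    also have "\<dots> = (cmat M *\<^sub>v b l) $ i"
      using R_matrix l i dims by (simp add: vsum_def)
    also have "\<dots> = (\<Sum>k<N. complex_of_int (M $$ (i, k)) * b l $ k)"
      using M i l dims by (simp add: index_mult_mat_vec_sum cmat_def carrier_matD del: index_mult_mat_vec)
    finally show ?thesis
      using l v by simp
  qed
qed (use R v in simp_all)

theorem proposition3p6:
  fixes N s n :: nat
    and M :: "int mat"
    and \<alpha> :: "nat \<Rightarrow> real"
    and a :: "nat \<Rightarrow> real vec"
    and C :: "complex set"
    and W :: "complex vec set"
    and b :: "nat \<Rightarrow> complex vec"
    and R :: "complex mat"
    and v :: "nat \<Rightarrow> real vec \<times> complex vec"
    and g0 :: "real vec \<times> complex vec \<Rightarrow> real vec \<times> complex vec"
  assumes SL: "in_SL N M"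
    and J0: "type_J0 M"
    and alpha_inj: "inj_on \<alpha> {..<s}"
    and alpha_all: "\<alpha> ` {..<s} = {x::real. poly (cpoly M) (of_real x) = 0}"
    and a_carrier: "\<forall>j<s. a j \<in> carrier_vec N"
    and a_nonzero: "\<forall>j<s. a j \<noteq> 0\<^sub>v N"
    and a_eig: "\<forall>j<s. rmat M *\<^sub>v a j = \<alpha> j \<cdot>\<^sub>v a j"
    and C_sub: "C \<subseteq> {z. z \<notin> \<real> \<and> poly (cpoly M) z = 0}"
    and C_choice: "\<forall>z. z \<notin> \<real> \<and> poly (cpoly M) z = 0 \<longrightarrow> (z \<in> C \<longleftrightarrow> cnj z \<notin> C)"
    and W_def: "W = gen_eigen_sum N (cmat M) C"
    and N_eq: "N = s + 2 * n"
    and b_basis: "is_basis_of N W n b"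
    and R_carrier: "R \<in> carrier_mat n n"
    and R_matrix: "\<forall>l<n. cmat M *\<^sub>v b l = vsum N (\<lambda>m. R $$ (m, l) \<cdot>\<^sub>v b m) {..<n}"
    and v_def: "\<forall>i. v i = (vec s (\<lambda>j. a j $ i), vec n (\<lambda>l. b l $ i))"
    and g0_def: "\<forall>w z. g0 (w, z) = (vec s (\<lambda>j. \<alpha> j * w $ j), transpose_mat R *\<^sub>v z)"
  shows "g0 ` lattice_gen s n N v \<subseteq> lattice_gen s n N v
     \<and> (\<forall>i<N. g0 (v i) = pcomb s n N (\<lambda>k. real_of_int (M $$ (i, k))) v)"
proof -
  have M: "M \<in> carrier_mat N N"
    using SL by (simp add: in_SL_def)
  have b: "\<forall>l<n. b l \<in> carrier_vec N"
    using b_basis by (simp add: is_basis_of_def)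
  have g0: "g0 p = (vec s (\<lambda>j. \<alpha> j * fst p $ j), transpose_mat R *\<^sub>v snd p)" for p
    using g0_def by (cases p) simp
  have g0_pcomb: "g0 (pcomb s n N c v) = pcomb s n N c (\<lambda>k. g0 (v k))" for c
    unfolding g0 using diag_mult_pcomb[of "transpose_mat R"] R_carrier v_def by simp
  have g0_v: "g0 (v i) = pcomb s n N (\<lambda>k. real_of_int (M $$ (i, k))) v" if "i < N" for i
    unfolding g0 by (rule generator_image_eq_pcomb[OF M a_carrier a_eig b R_matrix R_carrier v_def that])
  have g0_lattice_point: "g0 (pcomb s n N (\<lambda>k. real_of_int (c k)) v)
      = pcomb s n N (\<lambda>k. real_of_int (\<Sum>i<N. c i * M $$ (i, k))) v" for c
    by (simp add: g0_pcomb g0_v pcomb_cong[where u = "\<lambda>i. g0 (v i)"] pcomb_pcomb)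
  have "g0 ` lattice_gen s n N v \<subseteq> lattice_gen s n N v"
  proof
    fix y assume "y \<in> g0 ` lattice_gen s n N v"
    then obtain c where "y = g0 (pcomb s n N (\<lambda>k. real_of_int (c k)) v)"
      unfolding lattice_gen_def by blast
    then show "y \<in> lattice_gen s n N v"
      unfolding lattice_gen_def g0_lattice_point
      by (intro CollectI exI[of _ "\<lambda>k. \<Sum>i<N. c i * M $$ (i, k)"]) simp
  qed
  with g0_v show ?thesis
    by blast
qed

end
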